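(* Assume A1, A2, A4 and A5, and let $t,r\in\mathbb N_+$. Then \[ (1-\sup_{i\in S}q_i)\,\mathbb E\Big(\frac{1}{|\boldsymbol Z_t|^r}\,\Big|\,|\boldsymbol Z_t|>0\Big)\le\mathbb E\Big(\frac{1}{|\boldsymbol Z_t|^r}\,\Big|\,|\boldsymbol Z_\infty|>0\Big)\le\frac{1}{1-\sup_{i\in S}q_i}\,\mathbb E\Big(\frac{1}{|\boldsymbol Z_t|^r}\,\Big|\,|\boldsymbol Z_t|>0\Big). \]
   Context: Setting. Type space $S=[d]$ if $d<\infty$, $S=\mathbb N_+$ if $d=\infty$. $\boldsymbol Z^{i_0}=(\boldsymbol Z^{i_0}_t)_{t\ge0}$ is a multi-type Galton–Watson process on $\mathbb N_0^d$ started from one type-$i_0$ individual: each individual of type $i$ independently produces an offspring vector with law $p_i$. $|\boldsymbol Z_t|$ is the total number of individuals in generation $t$. Mean matrix $\boldsymbol M=(\mathbb E Z_1^{i,j})$, powers $m^{(r)}_{ij}$. A1: $\boldsymbol M$ irreducible and all $m^{(r)}_{ij}$ finite; $R$ is the common radius of convergence of $\sum_n m^{(n)}_{ij}z^n$. A2: $\sum_n m^{(n)}_{ij}R^n=\infty$ for all $i,j$; the strictly positive $\boldsymbol\nu,\boldsymbol u$ with $R\boldsymbol\nu\boldsymbol M=\boldsymbol\nu$, $R\boldsymbol M\boldsymbol u=\boldsymbol u$ satisfy $\boldsymbol u\cdot\boldsymbol\nu<\infty$ (normalised $\boldsymbol u\cdot\boldsymbol\nu=1$, $\sum\nu_i=1$);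 $R\in(0,1)$. $q_i$ = extinction probability of the process started from type $i$. A4: $\sup_iq_i<1$. A5: $\inf_iu_i>0$. $\{|\boldsymbol Z_\infty|>0\}=\bigcap_T\{|\boldsymbol Z_T|>0\}$. *)

theory Defs
  imports "HOL-Probability.Probability" "HOL-Library.Multiset"
begin

text \<open>A population (generation) is a finite multiset of types; an offspring vector of an
  individual is likewise a finite multiset of types (count M j = number of type-j children).\<close>

definition type_space :: "enat \<Rightarrow> nat set" where
  "type_space d = {i. 1 \<le> i \<and> enat i \<le> d}"

fun offspring_list :: "(nat \<Rightarrow> nat multiset pmf) \<Rightarrow> nat list \<Rightarrow> nat multiset pmf" where
  "offspring_list p [] = return_pmf {#}"
| "offspring_list p (i # is) =
     bind_pmf (p i) (\<lambda>a. bind_pmf (offspring_list p is) (\<lambda>b. return_pmf (a + b)))"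

definition next_gen :: "(nat \<Rightarrow> nat multiset pmf) \<Rightarrow> nat multiset \<Rightarrow> nat multiset pmf" where
  "next_gen p x = offspring_list p (sorted_list_of_multiset x)"

fun gen_law :: "(nat \<Rightarrow> nat multiset pmf) \<Rightarrow> nat multiset \<Rightarrow> nat \<Rightarrow> nat multiset pmf" where
  "gen_law p x 0 = return_pmf x"
| "gen_law p x (Suc t) = bind_pmf (gen_law p x t) (next_gen p)"

text \<open>Extinction probability q_i of the process started from one type-i individual:
  P(exists t. Z_t = 0) = sup_t P(Z_t = 0) (extinction is absorbing).\<close>
definition ext_prob :: "(nat \<Rightarrow> nat multiset pmf) \<Rightarrow> nat \<Rightarrow> real" where
  "ext_prob p i = (SUP t. measure_pmf.prob (gen_law p {#i#} t) {{#}})"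

definition mean_mat :: "(nat \<Rightarrow> nat multiset pmf) \<Rightarrow> nat \<Rightarrow> nat \<Rightarrow> ennreal" where
  "mean_mat p i j = (\<integral>\<^sup>+ x. ennreal (real (count x j)) \<partial>measure_pmf (p i))"

fun mean_pow :: "nat set \<Rightarrow> (nat \<Rightarrow> nat multiset pmf) \<Rightarrow> nat \<Rightarrow> nat \<Rightarrow> nat \<Rightarrow> ennreal" where
  "mean_pow S p 0 i j = (if i = j then 1 else 0)"
| "mean_pow S p (Suc n) i j = (\<Sum>k. (if k \<in> S then mean_mat p i k * mean_pow S p n k j else 0))"

definition is_MGW ::
  "'a measure \<Rightarrow> (nat \<Rightarrow> 'a \<Rightarrow> nat multiset) \<Rightarrow> (nat \<Rightarrow> nat multiset pmf) \<Rightarrow> nat \<Rightarrow> bool" where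
  "is_MGW M Z p i0 \<longleftrightarrow> prob_space M \<and>
     (\<forall>t. Z t \<in> measurable M (count_space UNIV)) \<and>
     (\<forall>t (h :: nat \<Rightarrow> nat multiset).
        measure M {\<omega> \<in> space M. \<forall>s\<le>t. Z s \<omega> = h s} =
        (if h 0 = {#i0#} then 1 else 0) * (\<Prod>s<t. pmf (next_gen p (h s)) (h (Suc s))))"

definition cond_exp_event :: "'a measure \<Rightarrow> ('a \<Rightarrow> real) \<Rightarrow> 'a set \<Rightarrow> real" where
  "cond_exp_event M X A = (\<integral>\<omega>. X \<omega> * indicator A \<omega> \<partial>M) / measure M A"

end

theory Submission
  imports Defs
begin

text \<open>Let q = sup q_i and let A be the survival event. Given Z_t = x with x nonempty, the process
  dies out only if the line of descent of every individual of x dies out; these lines are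
  independent, so P(extinction | Z_t = x) <= q_i <= q for any type i occurring in x. Hence
  (1 - q) E(g(Z_t)) <= E(g(Z_t); A) <= E(g(Z_t)) for every bounded g >= 0 vanishing on the empty
  population. Taking g = |x|^(-r) bounds the numerators and g = 1{x nonempty} the denominators
  of the two conditional expectations, and dividing gives both inequalities.\<close>

text \<open>With countable multisets, finite paths of populations form a countable type, so the law
  of a path is determined by its point masses.\<close>

instance multiset :: (countable) countable
proof (rule countable_classI[of "\<lambda>M. to_nat (sorted_list_of_multiset (image_mset to_nat M))"])
  fix x y :: "'a multiset"
  assume "to_nat (sorted_list_of_multiset (image_mset to_nat x))
        = to_nat (sorted_list_of_multiset (image_mset to_nat y))"
  then have "image_mset to_nat x = image_mset to_nat y"
    by (metis to_nat_split mset_sorted_list_of_multiset)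
  then show "x = y"
    by (metis inj_def inj_to_nat multiset.inj_map_strong)
qed

definition conv_pmf :: "'a::comm_monoid_add pmf \<Rightarrow> 'a pmf \<Rightarrow> 'a pmf" where
  "conv_pmf P Q = bind_pmf P (\<lambda>a. bind_pmf Q (\<lambda>b. return_pmf (a + b)))"

lemma conv_pmf_commute: "conv_pmf P Q = conv_pmf Q P"
  unfolding conv_pmf_def by (subst bind_commute_pmf) (simp add: add.commute)

lemma conv_pmf_assoc: "conv_pmf (conv_pmf P Q) R = conv_pmf P (conv_pmf Q R)"
  unfolding conv_pmf_def by (simp add: bind_assoc_pmf bind_return_pmf add.assoc)

lemma conv_pmf_return_0: "conv_pmf (return_pmf 0) P = P"
  unfolding conv_pmf_def by (simp add: bind_return_pmf bind_return_pmf')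

lemma pmf_conv_pmf_empty: "pmf (conv_pmf P Q) {#} = pmf P {#} * pmf Q {#}"
proof -
  have "conv_pmf P Q = map_pmf (\<lambda>(a, b). a + b) (pair_pmf P Q)"
    by (simp add: conv_pmf_def pair_pmf_def map_pmf_def bind_assoc_pmf bind_return_pmf)
  moreover have "(\<lambda>(a, b). a + b) -` {{#}} = {({#}, {#})}"
    by auto
  ultimately have "pmf (conv_pmf P Q) {#} = measure_pmf.prob (pair_pmf P Q) {({#}, {#})}"
    by (metis pmf_map)
  then show ?thesis
    by (simp add: measure_pmf_single pmf_pair)
qed

lemma offspring_list_Cons: "offspring_list p (i # is) = conv_pmf (p i) (offspring_list p is)"
  by (simp add: conv_pmf_def)

lemma offspring_list_append:
  "offspring_list p (xs @ ys) = conv_pmf (offspring_list p xs) (offspring_list p ys)"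
  by (induction xs)
    (simp_all add: offspring_list_Cons conv_pmf_return_0 conv_pmf_assoc del: offspring_list.simps(2))

lemma offspring_list_mset_eq:
  "mset xs = mset ys \<Longrightarrow> offspring_list p xs = offspring_list p ys"
proof (induction xs arbitrary: ys)
  case Nil
  then show ?case by simp
next
  case (Cons x xs)
  then obtain ys1 ys2 where ys: "ys = ys1 @ x # ys2"
    by (metis list.set_intros(1) set_mset_mset split_list)
  with Cons have IH: "offspring_list p xs = offspring_list p (ys1 @ ys2)"
    by simp
  have "offspring_list p ys
      = conv_pmf (offspring_list p ys1) (conv_pmf (p x) (offspring_list p ys2))"
    by (simp add: ys offspring_list_append offspring_list_Cons del: offspring_list.simps(2))
  also have "\<dots> = conv_pmf (p x) (conv_pmf (offspring_list p ys1) (offspring_list p ys2))"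
    by (metis conv_pmf_assoc conv_pmf_commute)
  also have "\<dots> = offspring_list p (x # xs)"
    by (simp add: IH offspring_list_append offspring_list_Cons del: offspring_list.simps(2))
  finally show ?case by simp
qed

lemma next_gen_add: "next_gen p (a + b) = conv_pmf (next_gen p a) (next_gen p b)"
  unfolding next_gen_def
  by (subst offspring_list_append[symmetric], rule offspring_list_mset_eq) simp

lemma next_gen_empty: "next_gen p {#} = return_pmf {#}"
  by (simp add: next_gen_def)

lemma gen_law_add: "gen_law p (a + b) s = conv_pmf (gen_law p a s) (gen_law p b s)"
proof (induction s)
  case 0
  then show ?case by (simp add: conv_pmf_def bind_return_pmf)
next
  case (Suc s)
  have "gen_law p (a + b) (Suc s)
      = bind_pmf (gen_law p a s) (\<lambda>x. bind_pmf (gen_law p b s) (\<lambda>y.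
          conv_pmf (next_gen p x) (next_gen p y)))"
    by (simp add: Suc conv_pmf_def bind_assoc_pmf bind_return_pmf next_gen_add)
  also have "\<dots> = conv_pmf (gen_law p a (Suc s)) (gen_law p b (Suc s))"
    unfolding conv_pmf_def gen_law.simps bind_assoc_pmf
    by (rule bind_pmf_cong[OF refl], subst bind_commute_pmf, rule refl)
  finally show ?case .
qed

lemma pmf_gen_law_le_ext_prob: "pmf (gen_law p {#i#} s) {#} \<le> ext_prob p i"
  unfolding ext_prob_def measure_pmf_single[symmetric]
  by (rule cSUP_upper) (auto intro!: bdd_aboveI[where M=1])

lemma pmf_gen_law_extinct_le:
  assumes "x \<noteq> {#}" "set_mset x \<subseteq> S" "\<forall>i\<in>S. ext_prob p i \<le> q"
  shows "pmf (gen_law p x s) {#} \<le> q"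
proof -
  obtain i where i: "i \<in># x"
    using assms(1) by (meson multiset_nonemptyE)
  then have "pmf (gen_law p x s) {#}
      = pmf (gen_law p {#i#} s) {#} * pmf (gen_law p (x - {#i#}) s) {#}"
    by (metis gen_law_add pmf_conv_pmf_empty insert_DiffM add_mset_add_single add.commute)
  also have "\<dots> \<le> pmf (gen_law p {#i#} s) {#}"
    by (simp add: mult_left_le pmf_le_1)
  also have "\<dots> \<le> q"
    using pmf_gen_law_le_ext_prob[of p i s] i assms(2,3) by fastforce
  finally show ?thesis .
qed

lemma offspring_list_types:
  assumes "set is \<subseteq> S" "\<forall>i\<in>S. \<forall>x\<in>set_pmf (p i). set_mset x \<subseteq> S"
    and "y \<in> set_pmf (offspring_list p is)"
  shows "set_mset y \<subseteq> S"
  using assms by (induction "is" arbitrary: y) (auto, blast+)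

lemma gen_law_types:
  assumes "set_mset x \<subseteq> S" "\<forall>i\<in>S. \<forall>x\<in>set_pmf (p i). set_mset x \<subseteq> S"
    and "y \<in> set_pmf (gen_law p x t)"
  shows "set_mset y \<subseteq> S"
  using assms(3)
proof (induction t arbitrary: y)
  case 0
  then show ?case using assms(1) by simp
next
  case (Suc t)
  then obtain z where "z \<in> set_pmf (gen_law p x t)" "y \<in> set_pmf (next_gen p z)"
    by auto
  moreover from Suc.IH this(1) have "set_mset z \<subseteq> S"
    by blast
  ultimately show ?case
    unfolding next_gen_def by (intro offspring_list_types[OF _ assms(2)]) simp_all
qed

fun path_law :: "(nat \<Rightarrow> nat multiset pmf) \<Rightarrow> nat \<Rightarrow> nat \<Rightarrow> nat multiset list pmf" where
  "path_law p i 0 = return_pmf [{#i#}]"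
| "path_law p i (Suc N) =
     bind_pmf (path_law p i N) (\<lambda>l. map_pmf (\<lambda>y. l @ [y]) (next_gen p (last l)))"

lemma length_path_law: "l \<in> set_pmf (path_law p i N) \<Longrightarrow> length l = Suc N"
  by (induction N arbitrary: l) auto

lemma last_path_law: "l \<in> set_pmf (path_law p i N) \<Longrightarrow> last l = l ! N"
  by (metis length_path_law last_conv_nth list.size(3) nat.distinct(1) diff_Suc_1)

lemma map_pmf_last_path_law: "map_pmf last (path_law p i N) = gen_law p {#i#} N"
proof (induction N)
  case 0
  then show ?case by simp
next
  case (Suc N)
  have "map_pmf last (path_law p i (Suc N)) = bind_pmf (path_law p i N) (\<lambda>l. next_gen p (last l))"
    by (simp add: map_bind_pmf pmf.map_comp o_def)
  also have "\<dots> = bind_pmf (map_pmf last (path_law p i N)) (next_gen p)"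
    by (simp add: bind_map_pmf)
  finally show ?case using Suc by simp
qed

lemma map_pmf_nth_path_law: "map_pmf (\<lambda>l. l ! N) (path_law p i N) = gen_law p {#i#} N"
  by (metis (no_types, lifting) map_pmf_cong map_pmf_last_path_law last_path_law)

lemma path_law_absorbing:
  assumes "l \<in> set_pmf (path_law p i N)" "T \<le> N" "l ! T = {#}"
  shows "l ! N = {#}"
  using assms
proof (induction N arbitrary: l)
  case 0
  then show ?case by simp
next
  case (Suc N)
  then obtain l' y where l: "l = l' @ [y]" "l' \<in> set_pmf (path_law p i N)"
      "y \<in> set_pmf (next_gen p (last l'))"
    by auto
  have len: "length l' = Suc N"
    using l(2) by (rule length_path_law)
  show ?case
  proof (cases "T = Suc N")
    case False
    with Suc.prems l len have "l' ! N = {#}"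
      by (intro Suc.IH[OF l(2)]) (auto simp: nth_append)
    with l len show ?thesis
      by (simp add: last_path_law next_gen_empty nth_append)
  qed (use Suc.prems in simp)
qed

lemma map_pmf_path_law_pair:
  "map_pmf (\<lambda>l. (l ! t, l ! (t + k))) (path_law p i (t + k))
     = bind_pmf (gen_law p {#i#} t) (\<lambda>x. map_pmf (Pair x) (gen_law p x k))"
proof (induction k)
  case 0
  have "map_pmf (\<lambda>l. (l ! t, l ! t)) (path_law p i t) = map_pmf (\<lambda>x. (x, x)) (gen_law p {#i#} t)"
    by (simp flip: map_pmf_nth_path_law add: pmf.map_comp o_def)
  then show ?case
    by (simp add: map_pmf_def bind_return_pmf)
next
  case (Suc k)
  have "map_pmf (\<lambda>l. (l ! t, l ! (t + Suc k))) (path_law p i (t + Suc k))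
      = bind_pmf (path_law p i (t + k))
          (\<lambda>l. map_pmf (\<lambda>y. ((l @ [y]) ! t, (l @ [y]) ! (t + Suc k))) (next_gen p (last l)))"
    by (simp add: map_bind_pmf pmf.map_comp o_def)
  also have "\<dots> = bind_pmf (path_law p i (t + k))
      (\<lambda>l. map_pmf (Pair (l ! t)) (next_gen p (l ! (t + k))))"
    by (intro bind_pmf_cong refl)
      (auto simp: nth_append last_path_law dest: length_path_law intro!: map_pmf_cong)
  also have "\<dots> = bind_pmf (map_pmf (\<lambda>l. (l ! t, l ! (t + k))) (path_law p i (t + k)))
      (\<lambda>(x, y). map_pmf (Pair x) (next_gen p y))"
    by (simp add: bind_map_pmf)
  also have "\<dots> = bind_pmf (gen_law p {#i#} t) (\<lambda>x. map_pmf (Pair x) (gen_law p x (Suc k)))"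
    by (simp add: Suc bind_assoc_pmf bind_map_pmf map_bind_pmf)
  finally show ?case .
qed

lemma pmf_path_law:
  "pmf (path_law p i N) l = (if length l = Suc N then
     of_bool (l ! 0 = {#i#}) * (\<Prod>s<N. pmf (next_gen p (l ! s)) (l ! Suc s)) else 0)"
proof (induction N arbitrary: l)
  case 0
  then show ?case
    by (cases l) (auto simp: pmf_return)
next
  case (Suc N)
  show ?case
  proof (cases "length l = Suc (Suc N)")
    case False
    then show ?thesis
      by (metis length_path_law set_pmf_iff)
  next
    case True
    then obtain l' y where l: "l = l' @ [y]" and len: "length l' = Suc N"
      by (metis append_butlast_last_id length_butlast diff_Suc_1 list.size(3) nat.distinct(1))
    have "pmf (path_law p i (Suc N)) l
        = (\<integral>x. pmf (map_pmf (\<lambda>y. x @ [y]) (next_gen p (last x))) l \<partial>path_law p i N)"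
      by (simp add: pmf_bind)
    also have "\<dots> = (\<integral>x. pmf (next_gen p (last l')) y * indicator {l'} x \<partial>path_law p i N)"
    proof (rule Bochner_Integration.integral_cong[OF refl])
      fix x :: "nat multiset list"
      show "pmf (map_pmf (\<lambda>y. x @ [y]) (next_gen p (last x))) l
          = pmf (next_gen p (last l')) y * indicator {l'} x"
      proof (cases "x = l'")
        case True
        have "inj (\<lambda>y. l' @ [y])"
          by (simp add: inj_def)
        from pmf_map_inj'[OF this] True l show ?thesis
          by simp
      qed (use l in \<open>auto simp: pmf_eq_0_set_pmf\<close>)
    qed
    also have "\<dots> = pmf (next_gen p (last l')) y * pmf (path_law p i N) l'"
      by (simp add: measure_pmf_single)
    also have "\<dots> = of_bool (l ! 0 = {#i#}) * (\<Prod>s<Suc N. pmf (next_gen p (l ! s)) (l ! Suc s))"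
    proof -
      have "last l' = l' ! N"
        using len by (cases l' rule: rev_cases) (auto simp: nth_append)
      with len l show ?thesis
        by (simp add: Suc nth_append)
    qed
    finally show ?thesis
      using True by simp
  qed
qed

lemma map_upt_eq_iff: "map f [0..<n] = l \<longleftrightarrow> length l = n \<and> (\<forall>s<n. f s = l ! s)"
  by (auto simp: list_eq_iff_nth_eq)

lemma path_vimage_singleton:
  "(\<lambda>\<omega>. map (\<lambda>s. Z s \<omega>) [0..<Suc N]) -` {l} \<inter> space M =
     (if length l = Suc N then {\<omega>\<in>space M. \<forall>s\<le>N. Z s \<omega> = l ! s} else {})"
  by (auto simp del: upt_Suc simp: map_upt_eq_iff less_Suc_eq_le)

lemma measurable_MGW_path:
  assumes "is_MGW M Z p i"
  shows "(\<lambda>\<omega>. map (\<lambda>s. Z s \<omega>) [0..<Suc N]) \<in> measurable M (count_space UNIV)"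
proof -
  have [measurable]: "Z s \<in> measurable M (count_space UNIV)" for s
    using assms by (simp add: is_MGW_def)
  have "{\<omega>\<in>space M. \<forall>s\<le>N. Z s \<omega> = l ! s} \<in> sets M" for l
    by measurable
  then show ?thesis
    unfolding measurable_count_space_eq2_countable path_vimage_singleton by auto
qed

lemma distr_MGW_path:
  assumes "is_MGW M Z p i"
  shows "distr M (count_space UNIV) (\<lambda>\<omega>. map (\<lambda>s. Z s \<omega>) [0..<Suc N])
       = measure_pmf (path_law p i N)"
proof (rule measure_eqI_countable[where A=UNIV])
  interpret prob_space M
    using assms by (simp add: is_MGW_def)
  fix l :: "nat multiset list"
  have "emeasure (distr M (count_space UNIV) (\<lambda>\<omega>. map (\<lambda>s. Z s \<omega>) [0..<Suc N])) {l}
      = emeasure M ((\<lambda>\<omega>. map (\<lambda>s. Z s \<omega>) [0..<Suc N]) -` {l} \<inter> space M)"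
    by (rule emeasure_distr[OF measurable_MGW_path[OF assms]]) simp
  also have "\<dots> = ennreal (pmf (path_law p i N) l)"
    using assms unfolding path_vimage_singleton is_MGW_def pmf_path_law
    by (simp add: emeasure_eq_measure)
  finally show "emeasure (distr M (count_space UNIV) (\<lambda>\<omega>. map (\<lambda>s. Z s \<omega>) [0..<Suc N])) {l}
      = emeasure (measure_pmf (path_law p i N)) {l}"
    by (simp add: emeasure_pmf_single)
qed auto

lemma integral_MGW_path:
  fixes F :: "nat multiset list \<Rightarrow> real"
  assumes "is_MGW M Z p i"
  shows "(\<integral>\<omega>. F (map (\<lambda>s. Z s \<omega>) [0..<Suc N]) \<partial>M) = measure_pmf.expectation (path_law p i N) F"
  by (subst distr_MGW_path[OF assms, symmetric], subst integral_distr[OF measurable_MGW_path[OF assms]])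
    simp_all

lemma integral_MGW_gen_law:
  fixes f :: "nat multiset \<Rightarrow> real"
  assumes "is_MGW M Z p i"
  shows "(\<integral>\<omega>. f (Z t \<omega>) \<partial>M) = measure_pmf.expectation (gen_law p {#i#} t) f"
proof -
  have "(\<integral>\<omega>. f (Z t \<omega>) \<partial>M) = (\<integral>\<omega>. f (map (\<lambda>s. Z s \<omega>) [0..<Suc t] ! t) \<partial>M)"
    by (simp add: nth_append)
  also have "\<dots> = measure_pmf.expectation (path_law p i t) (\<lambda>l. f (l ! t))"
    by (rule integral_MGW_path[OF assms])
  also have "\<dots> = measure_pmf.expectation (map_pmf (\<lambda>l. l ! t) (path_law p i t)) f"
    by simp
  finally show ?thesis
    by (simp only: map_pmf_nth_path_law)
qed

lemma expectation_bind_pmf_bounded: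
  fixes f :: "'b \<Rightarrow> real"
  assumes "\<And>x. \<bar>f x\<bar> \<le> B"
  shows "measure_pmf.expectation (bind_pmf P K) f
       = measure_pmf.expectation P (\<lambda>x. measure_pmf.expectation (K x) f)"
  unfolding measure_pmf_bind
proof (rule integral_bind[where K="count_space UNIV" and B=B and B'=1])
  show "(\<lambda>x. measure_pmf (K x)) \<in> measurable (measure_pmf P) (subprob_algebra (count_space UNIV))"
    by (simp add: space_subprob_algebra measure_pmf.subprob_space_axioms)
qed (simp_all add: assms measure_pmf.finite_measure_axioms measure_pmf.emeasure_le_1)

lemma expectation_path_law_extinct_le:
  fixes g :: "nat multiset \<Rightarrow> real"
  assumes types: "\<forall>j\<in>S. \<forall>x\<in>set_pmf (p j). set_mset x \<subseteq> S" and i: "i \<in> S"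
    and q: "\<forall>j\<in>S. ext_prob p j \<le> q"
    and g: "g {#} = 0" "\<And>x. 0 \<le> g x" "\<And>x. g x \<le> B"
  shows "measure_pmf.expectation (path_law p i (t + k))
           (\<lambda>l. g (l ! t) * of_bool (\<exists>T\<le>t + k. l ! T = {#}))
       \<le> q * measure_pmf.expectation (gen_law p {#i#} t) g"
proof -
  let ?G = "gen_law p {#i#} t"
  have pointwise: "g x * pmf (gen_law p x k) {#} \<le> q * g x" if "x \<in> set_pmf ?G" for x
  proof (cases "x = {#}")
    case False
    with gen_law_types[OF _ types that] i q have "pmf (gen_law p x k) {#} \<le> q"
      by (intro pmf_gen_law_extinct_le) auto
    then show ?thesis
      using g(2)[of x] by (metis mult.commute mult_left_mono)
  qed (simp add: g(1))
  have bounded: "\<bar>g x * of_bool b\<bar> \<le> B" for x b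
    using g(2,3)[of x] by simp
  have expectation_point: "measure_pmf.expectation P (\<lambda>y. of_bool (y = a)) = pmf P a"
    for P :: "nat multiset pmf" and a
  proof -
    have "(\<lambda>y. of_bool (y = a) :: real) = indicator {a}"
      by (auto simp: indicator_def)
    then show ?thesis
      by (simp add: measure_pmf_single)
  qed
  txt \<open>The empty population is absorbing, so extinction by time t + k means Z_(t+k) = 0;
    then condition on Z_t.\<close>
  have "measure_pmf.expectation (path_law p i (t + k))
          (\<lambda>l. g (l ! t) * of_bool (\<exists>T\<le>t + k. l ! T = {#}))
      = measure_pmf.expectation (map_pmf (\<lambda>l. (l ! t, l ! (t + k))) (path_law p i (t + k)))
          (\<lambda>(x, y). g x * of_bool (y = {#}))"
    by (auto intro!: integral_cong_AE AE_pmfI dest: path_law_absorbing)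
  also have "\<dots> = measure_pmf.expectation ?G (\<lambda>x. g x * pmf (gen_law p x k) {#})"
    by (simp add: map_pmf_path_law_pair expectation_bind_pmf_bounded[where B=B] bounded
        split_beta expectation_point)
  also have "\<dots> \<le> measure_pmf.expectation ?G (\<lambda>x. q * g x)"
    using pointwise
    by (intro integral_mono_AE AE_pmfI integrable_mult_right AE_I2
        measure_pmf.integrable_const_bound[where B=B])
      (auto simp: g(2,3) intro!: order_trans[OF mult_left_le[OF pmf_le_1 g(2)] g(3)])
  finally show ?thesis
    by simp
qed

lemma integrable_MGW_bounded:
  fixes g :: "nat multiset \<Rightarrow> real"
  assumes "is_MGW M Z p i" "\<And>x. \<bar>g x\<bar> \<le> B"
  shows "integrable M (\<lambda>\<omega>. g (Z t \<omega>))"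
proof -
  interpret prob_space M
    using assms(1) by (simp add: is_MGW_def)
  have "Z t \<in> measurable M (count_space UNIV)"
    using assms(1) by (simp add: is_MGW_def)
  from measurable_compose[OF this borel_measurable_count_space] show ?thesis
    by (intro integrable_const_bound[where B=B]) (simp_all add: assms(2))
qed

lemma MGW_integral_extinct_le:
  fixes g :: "nat multiset \<Rightarrow> real"
  assumes MGW: "is_MGW M Z p i"
    and types: "\<forall>j\<in>S. \<forall>x\<in>set_pmf (p j). set_mset x \<subseteq> S" and i: "i \<in> S"
    and q: "\<forall>j\<in>S. ext_prob p j \<le> q"
    and g: "g {#} = 0" "\<And>x. 0 \<le> g x" "\<And>x. g x \<le> B"
  shows "(\<integral>\<omega>. g (Z t \<omega>) * indicator (space M - (\<Inter>T. {\<omega>\<in>space M. size (Z T \<omega>) > 0})) \<omega> \<partial>M)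
       \<le> q * (\<integral>\<omega>. g (Z t \<omega>) \<partial>M)"
proof -
  have [measurable]: "Z s \<in> measurable M (count_space UNIV)" for s
    using MGW by (simp add: is_MGW_def)
  define C where "C N = {\<omega>\<in>space M. \<exists>T\<le>N. Z T \<omega> = {#}}" for N
  have C_sets: "C N \<in> sets M" for N
    unfolding C_def by measurable
  have path_nth: "map (\<lambda>s. Z s \<omega>) [0..<Suc N] ! T = Z T \<omega>" if "T \<le> N" for N T \<omega>
    using that by (simp del: upt_Suc add: less_Suc_eq_le)
  have C_bound: "(\<integral>\<omega>. g (Z t \<omega>) * indicator (C (t + k)) \<omega> \<partial>M) \<le> q * (\<integral>\<omega>. g (Z t \<omega>) \<partial>M)"
    for k
  proof -
    have "(\<integral>\<omega>. g (Z t \<omega>) * indicator (C (t + k)) \<omega> \<partial>M)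
        = measure_pmf.expectation (path_law p i (t + k))
            (\<lambda>l. g (l ! t) * of_bool (\<exists>T\<le>t + k. l ! T = {#}))"
      by (subst integral_MGW_path[OF MGW, symmetric], rule Bochner_Integration.integral_cong)
        (use path_nth[of _ "t + k"] in \<open>auto simp: C_def indicator_def\<close>)
    also have "\<dots> \<le> q * measure_pmf.expectation (gen_law p {#i#} t) g"
      by (rule expectation_path_law_extinct_le[of S p i q g B, OF types i q g])
    finally show ?thesis
      by (simp add: integral_MGW_gen_law[OF MGW])
  qed
  have "set_integrable M (\<Union>N. C N) (\<lambda>\<omega>. g (Z t \<omega>))"
    unfolding set_integrable_def using C_sets g(2,3)
    by (intro integrable_mult_indicator integrable_MGW_bounded[OF MGW, where B=B]) auto
  then have "(\<lambda>N. LINT \<omega>:C N|M. g (Z t \<omega>)) \<longlonglongrightarrow> (LINT \<omega>:(\<Union>N. C N)|M. g (Z t \<omega>))"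
    by (intro set_integral_cont_up C_sets) (auto simp: incseq_def C_def intro: le_trans)
  then have "(\<lambda>N. \<integral>\<omega>. g (Z t \<omega>) * indicator (C N) \<omega> \<partial>M)
      \<longlonglongrightarrow> (\<integral>\<omega>. g (Z t \<omega>) * indicator (\<Union>N. C N) \<omega> \<partial>M)"
    by (simp add: set_lebesgue_integral_def mult.commute)
  then have "(\<integral>\<omega>. g (Z t \<omega>) * indicator (\<Union>N. C N) \<omega> \<partial>M) \<le> q * (\<integral>\<omega>. g (Z t \<omega>) \<partial>M)"
    by (rule LIMSEQ_le_const2) (metis C_bound le_add_diff_inverse)
  moreover have "space M - (\<Inter>T. {\<omega>\<in>space M. size (Z T \<omega>) > 0}) = (\<Union>N. C N)"
    by (auto simp: C_def simp flip: nonempty_has_size)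
  ultimately show ?thesis
    by simp
qed

lemma MGW_integral_survival_ge:
  fixes g :: "nat multiset \<Rightarrow> real"
  assumes MGW: "is_MGW M Z p i"
    and types: "\<forall>j\<in>S. \<forall>x\<in>set_pmf (p j). set_mset x \<subseteq> S" and i: "i \<in> S"
    and q: "\<forall>j\<in>S. ext_prob p j \<le> q"
    and g: "g {#} = 0" "\<And>x. 0 \<le> g x" "\<And>x. g x \<le> B"
  shows "(1 - q) * (\<integral>\<omega>. g (Z t \<omega>) \<partial>M)
       \<le> (\<integral>\<omega>. g (Z t \<omega>) * indicator (\<Inter>T. {\<omega>\<in>space M. size (Z T \<omega>) > 0}) \<omega> \<partial>M)"
proof -
  have [measurable]: "Z s \<in> measurable M (count_space UNIV)" for s
    using MGW by (simp add: is_MGW_def)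
  define A where "A = (\<Inter>T. {\<omega>\<in>space M. size (Z T \<omega>) > 0})"
  have A_sets: "A \<in> sets M"
    unfolding A_def by measurable
  have integrable: "integrable M (\<lambda>\<omega>. g (Z t \<omega>))"
    using g(2,3) by (intro integrable_MGW_bounded[OF MGW, where B=B]) auto
  have integrable_on: "integrable M (\<lambda>\<omega>. g (Z t \<omega>) * indicator X \<omega>)" if "X \<in> sets M" for X
    using that integrable by (rule integrable_real_mult_indicator)
  have "(\<integral>\<omega>. g (Z t \<omega>) \<partial>M)
      = (\<integral>\<omega>. g (Z t \<omega>) * indicator A \<omega> \<partial>M) + (\<integral>\<omega>. g (Z t \<omega>) * indicator (space M - A) \<omega> \<partial>M)"
    using A_sets
    by (subst Bochner_Integration.integral_add[symmetric, OF integrable_on integrable_on])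
      (auto intro!: Bochner_Integration.integral_cong simp: indicator_def)
  moreover have "(\<integral>\<omega>. g (Z t \<omega>) * indicator (space M - A) \<omega> \<partial>M) \<le> q * (\<integral>\<omega>. g (Z t \<omega>) \<partial>M)"
    unfolding A_def by (rule MGW_integral_extinct_le[of M Z p i S q g B, OF MGW types i q g])
  ultimately show ?thesis
    unfolding A_def by (simp add: algebra_simps)
qed

lemma MGW_survival_prob_ge:
  assumes MGW: "is_MGW M Z p i"
    and types: "\<forall>j\<in>S. \<forall>x\<in>set_pmf (p j). set_mset x \<subseteq> S" and i: "i \<in> S"
    and q: "\<forall>j\<in>S. ext_prob p j \<le> q"
  shows "(1 - q) * measure M {\<omega>\<in>space M. size (Z t \<omega>) > 0}
       \<le> measure M (\<Inter>T. {\<omega>\<in>space M. size (Z T \<omega>) > 0})"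
proof -
  have [measurable]: "Z s \<in> measurable M (count_space UNIV)" for s
    using MGW by (simp add: is_MGW_def)
  define A where "A = (\<Inter>T. {\<omega>\<in>space M. size (Z T \<omega>) > 0})"
  define At where "At = {\<omega>\<in>space M. size (Z t \<omega>) > 0}"
  have "A \<in> sets M" "At \<in> sets M"
    unfolding A_def At_def by measurable
  moreover have "A \<subseteq> At"
    unfolding A_def At_def by blast
  then have "(\<integral>\<omega>. (of_bool (Z t \<omega> \<noteq> {#}) :: real) \<partial>M) = (\<integral>\<omega>. indicator At \<omega> \<partial>M)"
    "(\<integral>\<omega>. (of_bool (Z t \<omega> \<noteq> {#}) :: real) * indicator A \<omega> \<partial>M) = (\<integral>\<omega>. indicator A \<omega> \<partial>M)"
    by (auto intro!: Bochner_Integration.integral_cong simp: At_def indicator_def simp flip: nonempty_has_size)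
  moreover note MGW_integral_survival_ge[of M Z p i S q "\<lambda>x. of_bool (x \<noteq> {#})" 1, where t=t,
      OF MGW types i q]
  ultimately show ?thesis
    unfolding A_def At_def by simp
qed

lemma scaled_ratio_bounds:
  fixes a b c PA Pt :: real
  assumes "0 < c" "c * b \<le> a" "a \<le> b" "c * Pt \<le> PA" "PA \<le> Pt" "0 \<le> a" "0 \<le> PA"
  shows "c * (b / Pt) \<le> a / PA \<and> a / PA \<le> 1 / c * (b / Pt)"
proof (cases "PA = 0")
  case True
  txt \<open>Then Pt = 0 as well, and all ratios vanish since x / 0 = 0.\<close>
  with assms have "Pt = 0"
    by (smt (verit) mult_pos_pos)
  with True show ?thesis
    by simp
next
  case False
  with assms have PA: "PA > 0" and Pt: "Pt > 0"
    by simp_all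
  have "c * b * PA \<le> c * b * Pt"
    using assms by (simp add: mult_left_mono)
  also have "\<dots> \<le> a * Pt"
    using assms Pt by (simp add: mult_right_mono)
  finally have lower: "c * b * PA \<le> a * Pt" .
  have "a * (c * Pt) \<le> a * PA"
    using assms by (simp add: mult_left_mono)
  also have "\<dots> \<le> b * PA"
    using assms PA by (simp add: mult_right_mono)
  finally have upper: "a * (c * Pt) \<le> b * PA" .
  from lower upper PA Pt assms(1) show ?thesis
    by (simp add: field_simps)
qed

lemma MGW_cond_exp_survival_bounds:
  fixes g :: "nat multiset \<Rightarrow> real" and t :: nat
  assumes MGW: "is_MGW M Z p i"
    and types: "\<forall>j\<in>S. \<forall>x\<in>set_pmf (p j). set_mset x \<subseteq> S" and i: "i \<in> S"
    and q: "\<forall>j\<in>S. ext_prob p j \<le> q" "q < 1"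
    and g: "g {#} = 0" "\<And>x. 0 \<le> g x" "\<And>x. g x \<le> B"
  defines "A \<equiv> \<Inter>T. {\<omega>\<in>space M. size (Z T \<omega>) > 0}"
    and "At \<equiv> {\<omega>\<in>space M. size (Z t \<omega>) > 0}"
  shows "(1 - q) * cond_exp_event M (\<lambda>\<omega>. g (Z t \<omega>)) At \<le> cond_exp_event M (\<lambda>\<omega>. g (Z t \<omega>)) A
     \<and> cond_exp_event M (\<lambda>\<omega>. g (Z t \<omega>)) A \<le> 1 / (1 - q) * cond_exp_event M (\<lambda>\<omega>. g (Z t \<omega>)) At"
proof -
  interpret prob_space M
    using MGW by (simp add: is_MGW_def)
  have [measurable]: "Z s \<in> measurable M (count_space UNIV)" for s
    using MGW by (simp add: is_MGW_def)
  have sets: "A \<in> sets M" "At \<in> sets M"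
    unfolding A_def At_def by measurable
  have "A \<subseteq> At"
    unfolding A_def At_def by blast
  have integral_At: "(\<integral>\<omega>. g (Z t \<omega>) * indicator At \<omega> \<partial>M) = (\<integral>\<omega>. g (Z t \<omega>) \<partial>M)"
    by (rule Bochner_Integration.integral_cong) (auto simp: At_def indicator_def g(1))
  have "(1 - q) * (\<integral>\<omega>. g (Z t \<omega>) \<partial>M) \<le> (\<integral>\<omega>. g (Z t \<omega>) * indicator A \<omega> \<partial>M)"
    unfolding A_def by (rule MGW_integral_survival_ge[of M Z p i S q g B, OF MGW types i q(1) g])
  moreover have "(\<integral>\<omega>. g (Z t \<omega>) * indicator A \<omega> \<partial>M) \<le> (\<integral>\<omega>. g (Z t \<omega>) \<partial>M)"
    using sets g(2,3)
    by (intro integral_mono integrable_real_mult_indicator integrable_MGW_bounded[OF MGW, where B=B])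
      (auto simp: indicator_def)
  moreover have "(1 - q) * measure M At \<le> measure M A"
    unfolding A_def At_def by (rule MGW_survival_prob_ge[OF MGW types i q(1)])
  moreover have "measure M A \<le> measure M At"
    using \<open>A \<subseteq> At\<close> sets by (intro finite_measure_mono)
  moreover have "0 \<le> (\<integral>\<omega>. g (Z t \<omega>) * indicator A \<omega> \<partial>M)"
    using g(2) by simp
  ultimately show ?thesis
    unfolding cond_exp_event_def integral_At using q(2)
    by (intro scaled_ratio_bounds) simp_all
qed

theorem mainTheorem12:
  fixes d :: enat and p :: "nat \<Rightarrow> nat multiset pmf" and i0 :: nat
    and M :: "'a measure" and Z :: "nat \<Rightarrow> 'a \<Rightarrow> nat multiset"
    and R :: real and \<nu> u :: "nat \<Rightarrow> real" and t r :: nat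
  defines "S \<equiv> type_space d"
  assumes d_pos: "d \<ge> 1"
    and offspring_types: "\<forall>i\<in>S. \<forall>x\<in>set_pmf (p i). set_mset x \<subseteq> S"
    and i0: "i0 \<in> S"
    and MGW: "is_MGW M Z p i0"
    \<comment> \<open>A1\<close>
    and irreducible: "\<forall>i\<in>S. \<forall>j\<in>S. \<exists>n. mean_pow S p (Suc n) i j > 0"
    and finite_means: "\<forall>n. \<forall>i\<in>S. \<forall>j\<in>S. mean_pow S p n i j < \<infinity>"
    and radius: "\<forall>i\<in>S. \<forall>j\<in>S.
                   conv_radius (\<lambda>n. enn2real (mean_pow S p n i j)) = ereal R"
    \<comment> \<open>A2\<close>
    and R_recurrent: "\<forall>i\<in>S. \<forall>j\<in>S. (\<Sum>n. mean_pow S p n i j * ennreal R ^ n) = \<infinity>"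
    and R_range: "0 < R" "R < 1"
    and nu_pos: "\<forall>i\<in>S. \<nu> i > 0" and u_pos: "\<forall>i\<in>S. u i > 0"
    and nu_left: "\<forall>j\<in>S. ennreal R * (\<Sum>i. if i \<in> S then ennreal (\<nu> i) * mean_mat p i j else 0)
                          = ennreal (\<nu> j)"
    and u_right: "\<forall>i\<in>S. ennreal R * (\<Sum>j. if j \<in> S then mean_mat p i j * ennreal (u j) else 0)
                          = ennreal (u i)"
    and u_nu: "(\<Sum>i. if i \<in> S then ennreal (u i * \<nu> i) else 0) = 1"
    and nu_sum: "(\<Sum>i. if i \<in> S then ennreal (\<nu> i) else 0) = 1"
    \<comment> \<open>A4\<close>
    and A4: "(SUP i\<in>S. ext_prob p i) < 1"
    \<comment> \<open>A5\<close>
    and A5: "\<exists>c>0. \<forall>i\<in>S. c \<le> u i"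
    and t_pos: "t \<ge> 1" and r_pos: "r \<ge> 1"
  shows
    "(1 - (SUP i\<in>S. ext_prob p i)) *
        cond_exp_event M (\<lambda>\<omega>. 1 / real (size (Z t \<omega>)) ^ r) {\<omega>\<in>space M. size (Z t \<omega>) > 0}
       \<le> cond_exp_event M (\<lambda>\<omega>. 1 / real (size (Z t \<omega>)) ^ r)
            (\<Inter>T. {\<omega>\<in>space M. size (Z T \<omega>) > 0})
     \<and> cond_exp_event M (\<lambda>\<omega>. 1 / real (size (Z t \<omega>)) ^ r)
            (\<Inter>T. {\<omega>\<in>space M. size (Z T \<omega>) > 0})
       \<le> 1 / (1 - (SUP i\<in>S. ext_prob p i)) *
         cond_exp_event M (\<lambda>\<omega>. 1 / real (size (Z t \<omega>)) ^ r) {\<omega>\<in>space M. size (Z t \<omega>) > 0}"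
proof -
  have "ext_prob p j \<le> 1" for j
    unfolding ext_prob_def by (rule cSUP_least) auto
  then have q: "\<forall>j\<in>S. ext_prob p j \<le> (SUP i\<in>S. ext_prob p i)"
    by (intro ballI cSUP_upper bdd_aboveI[where M=1]) auto
  have "1 / real (size x) ^ r \<le> 1" for x :: "nat multiset"
    by (cases "size x") (simp_all add: power_0_left one_le_power)
  txt \<open>The integrand vanishes on the empty population because 1 / 0 = 0 and r >= 1.\<close>
  with q show ?thesis
    using r_pos by (intro MGW_cond_exp_survival_bounds[OF MGW offspring_types i0 _ A4]) simp_all
qed

end
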